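(* Let $d\ge1$. For integers $0\le m\le n$, $0\le j\le m/2$ and $1\le\ell\le\dim\mathcal H_{m-2j}^d$, $$e^{t}\big(\partial_{tt}-\Delta_x\big)\big[e^{-t}Q_{m,j,\ell}^{n,-1}(x,t)\big] = a_{m,j}\Big(Q_{m,j,\ell}^{n,0}(x,t)-b_{m,n}\,Q_{m-2,j-1,\ell}^{n,0}(x,t)\Big),$$ where $a_{m,j}=\frac{2m-2j+d-2}{2m+d-2}$ (with $a_{0,0}=1$ when $d=2$) and $b_{m,n}=(n-m+1)(n-m+2)$, and $Q_{m-2,j-1,\ell}^{n,0}:=0$ when $j=0$.
   Context: $\Delta_x$ is the Laplacian in $x\in\mathbb R^d$. For real $\alpha$ define $L_n^{\alpha}(t)=\sum_{k=0}^n \frac{(\alpha+k+1)_{n-k}}{(n-k)!}\frac{(-t)^k}{k!}$, and for real $\alpha,\beta$ define $P_n^{(\alpha,\beta)}(s)=\sum_{k=0}^n \frac{(\alpha+k+1)_{n-k}(n+\alpha+\beta+1)_k}{k!\,(n-k)!}\left(\frac{s-1}{2}\right)^k$ (classical Laguerre and Jacobi polynomials, extended polynomially in the parameters; in particular $P_0^{(-1,\beta)}=1$); $(a)_k$ is the Pochhammer symbol. For an integer $p\ge0$, $\mathcal H_p^d$ is the space of homogeneous harmonic polynomials of degree $p$ in $d$ variables (for $d=1$: $\mathcal H_0^1=\mathrm{span}\{1\}$, $\mathcal H_1^1=\mathrm{span}\{x\}$, $\mathcal H_p^1=\{0\}$ for $p\ge2$), and $\{Y_\ell^p\}$ is an orthonormal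 basis of it with respect to the normalized surface measure on $\mathbb S^{d-1}$. For $\mu\ge-1$ and integers $0\le m\le n$, $0\le j\le m/2$, $1\le\ell\le\dim\mathcal H^d_{m-2j}$, $$Q_{m,j,\ell}^{n,\mu}(x,t)=L_{n-m}^{2m+2\mu+d}(t)\,t^{2j}\,P_j^{(\mu,\,m-2j+\frac{d-2}{2})}\!\left(2\frac{\|x\|^2}{t^2}-1\right)Y_\ell^{m-2j}(x).$$ *)

theory Defs
  imports "HOL-Analysis.Analysis"
begin

definition laguerre :: "nat \<Rightarrow> real \<Rightarrow> real \<Rightarrow> real" where
  "laguerre n \<alpha> t = (\<Sum>k\<le>n. pochhammer (\<alpha> + real k + 1) (n - k) / fact (n - k)
                                * (-t) ^ k / fact k)"

definition jacobi :: "nat \<Rightarrow> real \<Rightarrow> real \<Rightarrow> real \<Rightarrow> real" where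
  "jacobi n \<alpha> \<beta> s = (\<Sum>k\<le>n. pochhammer (\<alpha> + real k + 1) (n - k)
        * pochhammer (real n + \<alpha> + \<beta> + 1) k / (fact k * fact (n - k)) * ((s - 1) / 2) ^ k)"

text \<open>The polynomial (in r = |x|^2 and t) t^(2j) P_j^(alpha,beta)(2 r / t^2 - 1),
  written without division so that it is also meaningful (the polynomial value) at t = 0.\<close>
definition hjacobi :: "nat \<Rightarrow> real \<Rightarrow> real \<Rightarrow> real \<Rightarrow> real \<Rightarrow> real" where
  "hjacobi j \<alpha> \<beta> r t = (\<Sum>k\<le>j. pochhammer (\<alpha> + real k + 1) (j - k)
        * pochhammer (real j + \<alpha> + \<beta> + 1) k / (fact k * fact (j - k))
        * (r - t\<^sup>2) ^ k * t ^ (2 * (j - k)))"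

lemma hjacobi_eq:
  assumes "t \<noteq> 0"
  shows "t ^ (2 * j) * jacobi j \<alpha> \<beta> (2 * r / t\<^sup>2 - 1) = hjacobi j \<alpha> \<beta> r t"
proof -
  have "t ^ (2 * j) * ((2 * r / t\<^sup>2 - 1 - 1) / 2) ^ k = (r - t\<^sup>2) ^ k * t ^ (2 * (j - k))"
    if "k \<le> j" for k
  proof -
    have e: "(2 * r / t\<^sup>2 - 1 - 1) / 2 = (r - t\<^sup>2) / t\<^sup>2" using assms
      by (simp add: field_simps)
    have "2 * j = 2 * (j - k) + 2 * k" using that by simp
    then have "t ^ (2 * j) = t ^ (2 * (j - k)) * (t\<^sup>2) ^ k"
      by (metis power_add power_mult)
    have "(t\<^sup>2) ^ k * ((r - t\<^sup>2) / t\<^sup>2) ^ k = (r - t\<^sup>2) ^ k" using assms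
      by (simp add: power_divide)
    then show ?thesis unfolding e using \<open>t ^ (2 * j) = _\<close>
      by (metis mult.assoc mult.commute)
  qed
  then show ?thesis
    unfolding jacobi_def hjacobi_def sum_distrib_left
    by (intro sum.cong) (auto simp: algebra_simps)
qed

definition pdiff :: "'n::finite \<Rightarrow> (real^'n \<Rightarrow> real) \<Rightarrow> real^'n \<Rightarrow> real" where
  "pdiff i f x = deriv (\<lambda>s. f (x + s *\<^sub>R axis i 1)) 0"

definition laplacian :: "(real^'n::finite \<Rightarrow> real) \<Rightarrow> real^'n \<Rightarrow> real" where
  "laplacian f x = (\<Sum>i\<in>UNIV. pdiff i (pdiff i f) x)"

definition harmonic_hom :: "nat \<Rightarrow> (real^'n::finite \<Rightarrow> real) set" where
  "harmonic_hom p = {Y. (\<exists>c :: ('n \<Rightarrow> nat) \<Rightarrow> real.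
        \<forall>x. Y x = (\<Sum>\<alpha>\<in>{\<alpha>. sum \<alpha> UNIV = p}. c \<alpha> * (\<Prod>i\<in>UNIV. (x $ i) ^ \<alpha> i)))
      \<and> (\<forall>x. laplacian Y x = 0)}"

text \<open>Q^{n,mu}_{m,j,l}(x,t) with the harmonic polynomial Y = Y_l^{m-2j} as a parameter.\<close>
definition Qpoly :: "nat \<Rightarrow> nat \<Rightarrow> nat \<Rightarrow> real \<Rightarrow> (real^'n::finite \<Rightarrow> real) \<Rightarrow> real^'n \<Rightarrow> real \<Rightarrow> real" where
  "Qpoly n m j \<mu> Y x t =
     laguerre (n - m) (2 * real m + 2 * \<mu> + real CARD('n)) t
     * hjacobi j \<mu> (real m - 2 * real j + (real CARD('n) - 2) / 2) ((norm x)\<^sup>2) t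
     * Y x"

definition acoef :: "nat \<Rightarrow> nat \<Rightarrow> nat \<Rightarrow> real" where
  "acoef d m j = (if m = 0 \<and> d = 2 then 1
     else (2 * real m - 2 * real j + real d - 2) / (2 * real m + real d - 2))"

definition bcoef :: "nat \<Rightarrow> nat \<Rightarrow> real" where
  "bcoef m n = (real n - real m + 1) * (real n - real m + 2)"

end

theory Submission
  imports Defs
begin

(* Write Q^{n,-1}(x,t) = L(t) H(|x|^2, t) Y(x), where L = L^gamma_{n-m} with gamma = 2m - 2 + d
   and H = t^{2j} P_j^{(-1,beta)}(2r/t^2 - 1).  Because L' = L^gamma - L^(gamma+1), the conjugated
   operator e^t d_tt e^-t maps L h to L^(gamma+2) h - 2 L^(gamma+1) h' + L^gamma h''; and for Y
   harmonic and homogeneous of degree p, Delta (Phi(|x|^2) Y) = (4 r Phi'' + (2d + 4p) Phi') Y by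
   Euler's identity.  In the variables w = r - t^2, s = t^2 the Jacobi factor H is a binary form of
   degree j, so the identities it has to satisfy become relations between its coefficients: with
   c = j + beta and H_A, H_B the factors with mu = 0 of degrees j and j - 1,
     d_t H = -2 c t H_B,   d_tt H - 4 r d_rr H - 4 (beta + 1) d_r H = -2 c (gamma - 1) H_B,
     (c + j) H = c (H_A - t^2 H_B).
   Combined with the three-term relation expressing (N+1)(N+2) L^(gamma-2)_(N+2) through L^gamma_N,
   L^(gamma+1)_N and L^(gamma+2)_N, this matches the right-hand side. *)

section \<open>Laguerre polynomials\<close>

definition laguerre_coeff :: "nat \<Rightarrow> real \<Rightarrow> nat \<Rightarrow> real" where
  "laguerre_coeff N a k = (if k \<le> N then ((a + real N) gchoose (N - k)) * (-1) ^ k / fact k else 0)"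

lemma laguerre_eq_coeff_sum:
  assumes "N \<le> M"
  shows "laguerre N a t = (\<Sum>k\<le>M. laguerre_coeff N a k * t ^ k)"
proof -
  have "(\<Sum>k\<le>M. laguerre_coeff N a k * t ^ k) = (\<Sum>k\<le>N. laguerre_coeff N a k * t ^ k)"
    by (rule sum.mono_neutral_right) (use assms in \<open>auto simp: laguerre_coeff_def\<close>)
  also have "\<dots> = laguerre N a t"
    unfolding laguerre_def laguerre_coeff_def
    by (intro sum.cong) (auto simp: gbinomial_pochhammer' of_nat_diff power_minus' algebra_simps)
  finally show ?thesis ..
qed

lemma laguerre_coeff_pascal:
  "laguerre_coeff (Suc N) a k = laguerre_coeff (Suc N) (a + 1) k - laguerre_coeff N (a + 1) k"
proof (cases "k \<le> N")
  case True
  define X where "X = a + real N + 1"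
  have "a + real (Suc N) = X" "a + 1 + real (Suc N) = X + 1" "a + 1 + real N = X" "Suc N - k = Suc (N - k)"
    using True by (simp_all add: X_def)
  then show ?thesis
    using True gbinomial_Suc_Suc[of X "N - k"] by (simp add: laguerre_coeff_def field_simps)
qed (auto simp: laguerre_coeff_def le_Suc_eq)

lemma laguerre_coeff_deriv:
  "real (Suc k) * laguerre_coeff N a (Suc k) = laguerre_coeff N a k - laguerre_coeff N (a + 1) k"
proof (cases "k < N")
  case True
  define X where "X = a + real N"
  have "a + 1 + real N = X + 1" "N - k = Suc (N - Suc k)" using True by (simp_all add: X_def)
  moreover have "fact (Suc k) = real (Suc k) * (fact k :: real)" by simp
  ultimately show ?thesis
    using True gbinomial_Suc_Suc[of X "N - Suc k"]
    by (simp add: laguerre_coeff_def X_def[symmetric] field_simps del: of_nat_Suc fact_Suc)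
qed (auto simp: laguerre_coeff_def)

lemma laguerre_coeff_absorb:
  "(real N + a + 1) * laguerre_coeff N a (Suc k) - real (Suc N) * laguerre_coeff (Suc N) a (Suc k)
     = laguerre_coeff N (a + 1) k"
proof (cases "k < N")
  case True
  define n where "n = N - Suc k"
  define X where "X = a + real N + 1"
  have absorb: "real (Suc n) * (X gchoose Suc n) = X * ((a + real N) gchoose n)"
    using gbinomial_absorption[of n X] by (simp add: X_def)
  have A: "laguerre_coeff N a (Suc k) = - (((a + real N) gchoose n) * (-1) ^ k / (real (Suc k) * fact k))"
    using True by (simp add: laguerre_coeff_def n_def del: of_nat_Suc)
  have B: "laguerre_coeff (Suc N) a (Suc k) = - ((X gchoose Suc n) * (-1) ^ k / (real (Suc k) * fact k))"
  proof -
    have "a + real (Suc N) = X" by (simp add: X_def)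
    then show ?thesis using True by (simp add: laguerre_coeff_def n_def Suc_diff_Suc del: of_nat_Suc)
  qed
  have C: "laguerre_coeff N (a + 1) k = (X gchoose Suc n) * (-1) ^ k / fact k"
    using True by (simp add: laguerre_coeff_def n_def X_def Suc_diff_Suc algebra_simps)
  have D: "real (Suc N) = real (Suc n) + real (Suc k)" "real N + a + 1 = X"
    using True by (simp_all add: n_def X_def)
  show ?thesis
    unfolding A B C D using absorb by (simp add: field_simps del: of_nat_Suc)
qed (auto simp: laguerre_coeff_def)

lemma laguerre_coeff_absorb_0:
  "(real N + a + 1) * laguerre_coeff N a 0 = real (Suc N) * laguerre_coeff (Suc N) a 0"
  using gbinomial_absorption[of N "a + real N + 1"] by (simp add: laguerre_coeff_def algebra_simps)

lemma laguerre_has_real_derivative: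
  "(laguerre N a has_real_derivative laguerre N a t - laguerre N (a + 1) t) (at t)"
proof -
  let ?c = "laguerre_coeff N a"
  have expand: "laguerre N a = (\<lambda>t. \<Sum>k\<le>Suc N. ?c k * t ^ k)"
    using laguerre_eq_coeff_sum[of N "Suc N" a] by auto
  have "((\<lambda>t. \<Sum>k\<le>Suc N. ?c k * t ^ k) has_real_derivative
          (\<Sum>k\<le>Suc N. ?c k * (real k * t ^ (k - 1)))) (at t)"
    by (rule DERIV_sum) (auto intro!: derivative_eq_intros)
  also have "(\<Sum>k\<le>Suc N. ?c k * (real k * t ^ (k - 1))) = (\<Sum>k\<le>N. real (Suc k) * ?c (Suc k) * t ^ k)"
    by (subst sum.atMost_Suc_shift) (simp add: algebra_simps)
  also have "\<dots> = laguerre N a t - laguerre N (a + 1) t"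
    by (simp only: laguerre_eq_coeff_sum[of N N] laguerre_coeff_deriv left_diff_distrib sum_subtractf)
  finally show ?thesis
    unfolding expand .
qed

lemma laguerre_Suc_pascal:
  "laguerre (Suc N) a t = laguerre (Suc N) (a + 1) t - laguerre N (a + 1) t"
  by (simp add: laguerre_eq_coeff_sum[of _ "Suc N"] laguerre_coeff_pascal[of N a]
        left_diff_distrib sum_subtractf)

lemma laguerre_times_t:
  "t * laguerre N (a + 1) t = (real N + a + 1) * laguerre N a t - real (Suc N) * laguerre (Suc N) a t"
proof -
  have "(real N + a + 1) * laguerre N a t - real (Suc N) * laguerre (Suc N) a t
      = (\<Sum>k\<le>Suc N. ((real N + a + 1) * laguerre_coeff N a k
                         - real (Suc N) * laguerre_coeff (Suc N) a k) * t ^ k)"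
    by (simp add: laguerre_eq_coeff_sum[of _ "Suc N"] sum_distrib_left sum_subtractf[symmetric]
        algebra_simps)
  also have "\<dots> = (\<Sum>k\<le>N. laguerre_coeff N (a + 1) k * t ^ Suc k)"
    by (subst sum.atMost_Suc_shift) (simp only: laguerre_coeff_absorb laguerre_coeff_absorb_0, simp)
  also have "\<dots> = t * laguerre N (a + 1) t"
    by (simp add: laguerre_eq_coeff_sum[of N N] sum_distrib_left algebra_simps)
  finally show ?thesis ..
qed

lemma laguerre_Suc_Suc_minus_2:
  "real (Suc N) * real (Suc (Suc N)) * laguerre (Suc (Suc N)) (a - 2) t
     = t\<^sup>2 * laguerre N (a + 2) t - 2 * a * t * laguerre N (a + 1) t + a * (a - 1) * laguerre N a t"
proof -
  have t1: "t * laguerre N (a + 2) t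
      = (real N + a + 2) * laguerre N (a + 1) t - real (Suc N) * laguerre (Suc N) (a + 1) t"
    using laguerre_times_t[of t N "a + 1"] by (simp add: algebra_simps)
  have t2: "t * laguerre N (a + 1) t = (real N + a + 1) * laguerre N a t - real (Suc N) * laguerre (Suc N) a t"
    using laguerre_times_t[of t N a] by (simp add: algebra_simps)
  have t3: "t * laguerre (Suc N) (a + 1) t
      = (real N + a + 2) * laguerre (Suc N) a t - real (Suc (Suc N)) * laguerre (Suc (Suc N)) a t"
    using laguerre_times_t[of t "Suc N" a] by (simp add: algebra_simps)
  have p1: "laguerre (Suc (Suc N)) (a - 2) t = laguerre (Suc (Suc N)) (a - 1) t - laguerre (Suc N) (a - 1) t"
    using laguerre_Suc_pascal[of "Suc N" "a - 2" t] by (simp add: algebra_simps)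
  have p2: "laguerre (Suc (Suc N)) (a - 1) t = laguerre (Suc (Suc N)) a t - laguerre (Suc N) a t"
    using laguerre_Suc_pascal[of "Suc N" "a - 1" t] by (simp add: algebra_simps)
  have p3: "laguerre (Suc N) (a - 1) t = laguerre (Suc N) a t - laguerre N a t"
    using laguerre_Suc_pascal[of N "a - 1" t] by (simp add: algebra_simps)
  have "t\<^sup>2 * laguerre N (a + 2) t = (real N + a + 2) * (t * laguerre N (a + 1) t)
      - real (Suc N) * (t * laguerre (Suc N) (a + 1) t)"
    by (simp add: power2_eq_square t1 algebra_simps)
  moreover have "2 * a * t * laguerre N (a + 1) t = 2 * a * (t * laguerre N (a + 1) t)"
    by simp
  ultimately show ?thesis
    unfolding p1 p2 p3 t2 t3 by (simp add: algebra_simps)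
qed

lemma deriv2_exp_laguerre_mult:
  assumes h: "\<And>s. (h has_real_derivative h' s) (at s)" and h': "\<And>s. (h' has_real_derivative h'' s) (at s)"
  shows "deriv (deriv (\<lambda>s. exp (- s) * (laguerre N a s * h s * K))) t
       = exp (- t) * (laguerre N (a + 2) t * h t - 2 * laguerre N (a + 1) t * h' t
                      + laguerre N a t * h'' t) * K"
proof -
  note L = laguerre_has_real_derivative[of N a] and L1 = laguerre_has_real_derivative[of N "a + 1"]
  have "((\<lambda>s. exp (- s) * (laguerre N a s * h s * K)) has_real_derivative
      exp (- s) * (laguerre N a s * h' s - laguerre N (a + 1) s * h s) * K) (at s)" for s
    by (rule derivative_eq_intros L h refl | simp add: algebra_simps)+
  then have first: "deriv (\<lambda>s. exp (- s) * (laguerre N a s * h s * K))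
      = (\<lambda>s. exp (- s) * (laguerre N a s * h' s - laguerre N (a + 1) s * h s) * K)"
    by (intro ext DERIV_imp_deriv)
  have "((\<lambda>s. exp (- s) * (laguerre N a s * h' s - laguerre N (a + 1) s * h s) * K) has_real_derivative
      exp (- t) * (laguerre N (a + 2) t * h t - 2 * laguerre N (a + 1) t * h' t
                   + laguerre N a t * h'' t) * K) (at t)"
    by (rule derivative_eq_intros L L1 h h' refl | simp add: algebra_simps)+
  then show ?thesis
    unfolding first by (rule DERIV_imp_deriv)
qed

section \<open>Binary forms\<close>

definition binary_form :: "nat \<Rightarrow> (nat \<Rightarrow> real) \<Rightarrow> real \<Rightarrow> real \<Rightarrow> real" where
  "binary_form J c w s = (\<Sum>k\<le>J. c k * w ^ k * s ^ (J - k))"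

definition dw_coeffs :: "(nat \<Rightarrow> real) \<Rightarrow> nat \<Rightarrow> real" where
  "dw_coeffs c k = real (Suc k) * c (Suc k)"

definition ds_coeffs :: "nat \<Rightarrow> (nat \<Rightarrow> real) \<Rightarrow> nat \<Rightarrow> real" where
  "ds_coeffs J c k = real (J - k) * c k"

lemma binary_form_cong:
  "(\<And>k. k \<le> J \<Longrightarrow> c k = d k) \<Longrightarrow> binary_form J c w s = binary_form J d w s"
  unfolding binary_form_def by (intro sum.cong) auto

lemma binary_form_scale: "a * binary_form J c w s = binary_form J (\<lambda>k. a * c k) w s"
  unfolding binary_form_def by (simp add: sum_distrib_left algebra_simps)

lemma binary_form_diff:
  "binary_form J c w s - binary_form J d w s = binary_form J (\<lambda>k. c k - d k) w s"
  unfolding binary_form_def by (simp add: sum_subtractf[symmetric] algebra_simps)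

lemma binary_form_mult_s:
  assumes "c J = 0"
  shows "s * binary_form (J - 1) c w s = binary_form J c w s"
proof (cases J)
  case (Suc K)
  have "binary_form J c w s = (\<Sum>k\<le>K. c k * w ^ k * s ^ (Suc K - k))"
    unfolding binary_form_def using assms Suc by simp
  also have "\<dots> = s * binary_form K c w s"
    unfolding binary_form_def sum_distrib_left by (intro sum.cong) (auto simp: Suc_diff_le)
  finally show ?thesis using Suc by simp
qed (use assms in \<open>simp add: binary_form_def\<close>)

lemma binary_form_mult_w:
  assumes "c J = 0"
  shows "w * binary_form (J - 1) c w s = binary_form J (\<lambda>k. if k = 0 then 0 else c (k - 1)) w s"
proof (cases J)
  case (Suc K)
  show ?thesis unfolding Suc binary_form_def
    by (subst sum.atMost_Suc_shift) (simp add: sum_distrib_left algebra_simps)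
qed (use assms in \<open>simp add: binary_form_def\<close>)

lemma binary_form_dw_sum:
  assumes "\<forall>k>J. c k = 0"
  shows "(\<Sum>k\<le>J. c k * (real k * w ^ (k - 1)) * s ^ (J - k)) = binary_form (J - 1) (dw_coeffs c) w s"
proof (cases J)
  case (Suc K)
  show ?thesis unfolding Suc
    by (subst sum.atMost_Suc_shift) (simp add: binary_form_def dw_coeffs_def algebra_simps)
qed (use assms in \<open>simp add: binary_form_def dw_coeffs_def\<close>)

lemma binary_form_ds_sum:
  "(\<Sum>k\<le>J. c k * w ^ k * (real (J - k) * s ^ (J - k - 1))) = binary_form (J - 1) (ds_coeffs J c) w s"
proof (cases J)
  case (Suc K)
  then have "(\<Sum>k\<le>J. c k * w ^ k * (real (J - k) * s ^ (J - k - 1)))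
      = (\<Sum>k\<le>K. c k * w ^ k * (real (J - k) * s ^ (J - k - 1)))"
    by simp
  also have "\<dots> = binary_form (J - 1) (ds_coeffs J c) w s"
    unfolding binary_form_def ds_coeffs_def using Suc
    by (intro sum.cong) (auto simp: algebra_simps Suc_diff_le)
  finally show ?thesis .
qed (simp add: binary_form_def ds_coeffs_def)

lemma binary_form_has_derivative_w:
  assumes "\<forall>k>J. c k = 0"
  shows "((\<lambda>r. binary_form J c (r - a) s) has_real_derivative
           binary_form (J - 1) (dw_coeffs c) (r - a) s) (at r)"
proof -
  have "((\<lambda>r. binary_form J c (r - a) s) has_real_derivative
      (\<Sum>k\<le>J. c k * (real k * (r - a) ^ (k - 1)) * s ^ (J - k))) (at r)"
    unfolding binary_form_def by (rule DERIV_sum) (auto intro!: derivative_eq_intros)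
  then show ?thesis
    unfolding binary_form_dw_sum[OF assms] .
qed

lemma deriv_binary_form_w:
  "\<forall>k>J. c k = 0 \<Longrightarrow>
     deriv (\<lambda>r. binary_form J c (r - a) s) = (\<lambda>r. binary_form (J - 1) (dw_coeffs c) (r - a) s)"
  by (intro ext DERIV_imp_deriv binary_form_has_derivative_w)

lemma binary_form_has_derivative_t:
  assumes "\<forall>k>J. c k = 0"
  shows "((\<lambda>t. binary_form J c (r - t\<^sup>2) (t\<^sup>2)) has_real_derivative
     2 * t * binary_form (J - 1) (\<lambda>k. ds_coeffs J c k - dw_coeffs c k) (r - t\<^sup>2) (t\<^sup>2)) (at t)"
proof -
  let ?w = "r - t\<^sup>2" and ?s = "t\<^sup>2"
  have "((\<lambda>t. binary_form J c (r - t\<^sup>2) (t\<^sup>2)) has_real_derivative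
      (\<Sum>k\<le>J. 2 * t * (c k * ?w ^ k * (real (J - k) * ?s ^ (J - k - 1))
                      - c k * (real k * ?w ^ (k - 1)) * ?s ^ (J - k)))) (at t)"
    unfolding binary_form_def by (rule DERIV_sum) (auto intro!: derivative_eq_intros simp: algebra_simps)
  also have "(\<Sum>k\<le>J. 2 * t * (c k * ?w ^ k * (real (J - k) * ?s ^ (J - k - 1))
                      - c k * (real k * ?w ^ (k - 1)) * ?s ^ (J - k)))
      = 2 * t * (binary_form (J - 1) (ds_coeffs J c) ?w ?s - binary_form (J - 1) (dw_coeffs c) ?w ?s)"
    by (simp only: sum_distrib_left[symmetric] sum_subtractf binary_form_ds_sum binary_form_dw_sum[OF assms])
  finally show ?thesis
    by (simp only: binary_form_diff)
qed

section \<open>Homogenized Jacobi polynomials\<close>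

definition hjacobi_coeff :: "nat \<Rightarrow> real \<Rightarrow> real \<Rightarrow> nat \<Rightarrow> real" where
  "hjacobi_coeff J \<mu> \<beta> k = (if k \<le> J then pochhammer (\<mu> + real k + 1) (J - k)
       * pochhammer (real J + \<mu> + \<beta> + 1) k / (fact k * fact (J - k)) else 0)"

lemma hjacobi_coeff_eq_0: "J < k \<Longrightarrow> hjacobi_coeff J \<mu> \<beta> k = 0"
  by (simp add: hjacobi_coeff_def)

lemma pochhammer_div_fact_eq_binomial:
  assumes "k \<le> J"
  shows "pochhammer (real k + 1) (J - k) / fact (J - k) = real (J choose k)"
proof -
  have "real (J choose k) = real (J choose (J - k))"
    using assms by (simp add: binomial_symmetric[symmetric])
  also have "\<dots> = pochhammer (real k + 1) (J - k) / fact (J - k)"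
    using assms by (simp add: binomial_gbinomial gbinomial_pochhammer' of_nat_diff)
  finally show ?thesis ..
qed

lemma hjacobi_coeff_0:
  "hjacobi_coeff J 0 \<beta> k = real (J choose k) * pochhammer (real J + \<beta> + 1) k / fact k"
  using pochhammer_div_fact_eq_binomial[of k J]
  by (cases "k \<le> J") (auto simp: hjacobi_coeff_def field_simps)

lemma hjacobi_coeff_minus1_Suc:
  "hjacobi_coeff (Suc J) (-1) \<beta> (Suc k)
     = real (J choose k) * pochhammer (real J + \<beta> + 1) (Suc k) / fact (Suc k)"
  using pochhammer_div_fact_eq_binomial[of k J]
  by (cases "k \<le> J") (auto simp: hjacobi_coeff_def field_simps simp del: fact_Suc)

lemma hjacobi_coeff_minus1_0: "hjacobi_coeff (Suc J) (-1) \<beta> 0 = 0"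
  by (simp add: hjacobi_coeff_def pochhammer_0_left)

lemma hjacobi_coeff_minus1_Suc_mult:
  "real (Suc k) * hjacobi_coeff (Suc J) (-1) \<beta> (Suc k)
     = (real J + \<beta> + 1 + real k) * hjacobi_coeff J 0 \<beta> k"
  by (simp add: hjacobi_coeff_minus1_Suc hjacobi_coeff_0 pochhammer_rec' field_simps del: fact_Suc)
     (simp add: algebra_simps)

lemma hjacobi_coeff_0_Suc:
  "(real (Suc k))\<^sup>2 * hjacobi_coeff J 0 \<beta> (Suc k)
     = (real J + \<beta> + 1 + real k) * real (J - k) * hjacobi_coeff J 0 \<beta> k"
proof -
  have binom: "real (Suc k) * real (J choose Suc k) = real (J - k) * real (J choose k)"
    using binomial_absorption[of k J] binomial_absorb_comp[of J k] by (metis of_nat_mult)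
  have "(real (Suc k))\<^sup>2 * hjacobi_coeff J 0 \<beta> (Suc k)
      = (real (Suc k) * real (J choose Suc k)) * pochhammer (real J + \<beta> + 1) (Suc k) / fact k"
    by (simp add: hjacobi_coeff_0 power2_eq_square del: of_nat_Suc)
  also have "\<dots> = (real J + \<beta> + 1 + real k) * real (J - k) * hjacobi_coeff J 0 \<beta> k"
    unfolding binom by (simp add: hjacobi_coeff_0 pochhammer_rec')
  finally show ?thesis .
qed

lemma hjacobi_coeff_0_Suc_degree:
  "(real J + \<beta> + 1) * real (Suc J - k) * hjacobi_coeff (Suc J) 0 \<beta> k
     = real (Suc J) * (real J + \<beta> + 1 + real k) * hjacobi_coeff J 0 \<beta> k"
proof -
  define c where "c = real J + \<beta> + 1"
  have binom: "real (Suc J - k) * real (Suc J choose k) = real (Suc J) * real (J choose k)"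
    using binomial_absorb_comp[of "Suc J" k] by (metis diff_Suc_1 of_nat_mult)
  have poch: "c * pochhammer (c + 1) k = (c + real k) * pochhammer c k"
    using pochhammer_rec[of c k] pochhammer_rec'[of c k] by simp
  have "c * real (Suc J - k) * hjacobi_coeff (Suc J) 0 \<beta> k
      = (real (Suc J - k) * real (Suc J choose k)) * (c * pochhammer (c + 1) k) / fact k"
    by (simp add: hjacobi_coeff_0 c_def field_simps)
  also have "\<dots> = real (Suc J) * (c + real k) * hjacobi_coeff J 0 \<beta> k"
    unfolding binom poch by (simp add: hjacobi_coeff_0 c_def)
  finally show ?thesis unfolding c_def .
qed

lemma hjacobi_coeff_top_degree:
  "(real J + \<beta> + 1) * hjacobi_coeff (Suc J) 0 \<beta> (Suc J)
     = (real J + \<beta> + 1 + real (Suc J)) * hjacobi_coeff (Suc J) (-1) \<beta> (Suc J)"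
proof -
  define c where "c = real J + \<beta> + 1"
  have poch: "c * pochhammer (c + 1) (Suc J) = (c + real (Suc J)) * pochhammer c (Suc J)"
    using pochhammer_rec[of c "Suc J"] pochhammer_rec'[of c "Suc J"] by simp
  have "c * hjacobi_coeff (Suc J) 0 \<beta> (Suc J) = c * pochhammer (c + 1) (Suc J) / fact (Suc J)"
    by (simp add: hjacobi_coeff_0 c_def algebra_simps del: fact_Suc)
  also have "\<dots> = (c + real (Suc J)) * hjacobi_coeff (Suc J) (-1) \<beta> (Suc J)"
    unfolding poch by (simp add: hjacobi_coeff_minus1_Suc c_def del: fact_Suc)
  finally show ?thesis unfolding c_def .
qed

lemma hjacobi_eq_binary_form:
  "hjacobi J \<mu> \<beta> r t = binary_form J (hjacobi_coeff J \<mu> \<beta>) (r - t\<^sup>2) (t\<^sup>2)"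
  unfolding hjacobi_def binary_form_def hjacobi_coeff_def
  by (intro sum.cong) (auto simp: power_mult)

lemma hjacobi_0: "hjacobi 0 \<mu> \<beta> r = (\<lambda>t. 1)"
  by (simp add: hjacobi_def fun_eq_iff)

lemma hjacobi_coeff_minus1_mult:
  "real (Suc J - k) * hjacobi_coeff (Suc J) (-1) \<beta> k = real k * hjacobi_coeff J 0 \<beta> k"
proof (cases k)
  case (Suc i)
  have "real (Suc i) * (real (J - i) * hjacobi_coeff (Suc J) (-1) \<beta> (Suc i))
      = real (J - i) * (real (Suc i) * hjacobi_coeff (Suc J) (-1) \<beta> (Suc i))"
    by simp
  also have "\<dots> = (real J + \<beta> + 1 + real i) * real (J - i) * hjacobi_coeff J 0 \<beta> i"
    unfolding hjacobi_coeff_minus1_Suc_mult by simp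
  also have "\<dots> = real (Suc i) * (real (Suc i) * hjacobi_coeff J 0 \<beta> (Suc i))"
    unfolding hjacobi_coeff_0_Suc[symmetric] by (simp add: power2_eq_square)
  finally show ?thesis
    using Suc by (simp del: of_nat_Suc)
qed (simp add: hjacobi_coeff_minus1_0)

lemma hjacobi_coeff_minus1_dt:
  "ds_coeffs (Suc J) (hjacobi_coeff (Suc J) (-1) \<beta>) k - dw_coeffs (hjacobi_coeff (Suc J) (-1) \<beta>) k
     = - (real J + \<beta> + 1) * hjacobi_coeff J 0 \<beta> k"
  using hjacobi_coeff_minus1_mult[of J k \<beta>] hjacobi_coeff_minus1_Suc_mult[of k J \<beta>]
  by (simp add: ds_coeffs_def dw_coeffs_def algebra_simps del: of_nat_Suc)

lemma hjacobi_coeff_minus1_degree_raise: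
  assumes "k \<le> Suc J"
  shows "(real J + \<beta> + 1 + real (Suc J)) * hjacobi_coeff (Suc J) (-1) \<beta> k
     = (real J + \<beta> + 1) * (hjacobi_coeff (Suc J) 0 \<beta> k - hjacobi_coeff J 0 \<beta> k)"
proof (cases "k = Suc J")
  case True
  then show ?thesis
    using hjacobi_coeff_top_degree[of J \<beta>] by (simp add: hjacobi_coeff_def)
next
  case False
  define c where "c = real J + \<beta> + 1"
  have pos: "real (Suc J - k) \<noteq> 0" using assms False by simp
  have "real (Suc J - k) * ((c + real (Suc J)) * hjacobi_coeff (Suc J) (-1) \<beta> k)
      = real (Suc J - k) * (c * (hjacobi_coeff (Suc J) 0 \<beta> k - hjacobi_coeff J 0 \<beta> k))"
    using hjacobi_coeff_minus1_mult[of J k \<beta>] hjacobi_coeff_0_Suc_degree[of J \<beta> k] assms False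
    by (simp add: c_def of_nat_diff algebra_simps del: of_nat_Suc)
  then show ?thesis
    using pos by (simp add: c_def)
qed

(* Coefficientwise form of hjacobi_minus1_wave. *)
lemma hjacobi_coeff_minus1_wave:
  fixes J k :: nat and \<beta> :: real
  assumes "k \<le> J"
  defines "B \<equiv> hjacobi_coeff J 0 \<beta>" and "C \<equiv> hjacobi_coeff (Suc J) (-1) \<beta>"
    and "c \<equiv> real J + \<beta> + 1"
  shows "- 2 * c * B k - 4 * c * (ds_coeffs J B k - dw_coeffs B k)
     - 4 * (if k = 0 then 0 else dw_coeffs (dw_coeffs C) (k - 1))
     - 4 * dw_coeffs (dw_coeffs C) k - 4 * (\<beta> + 1) * dw_coeffs C k
   = - 2 * c * (2 * c + 2 * real J + 1) * B k"
proof -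
  define D where "D = real (Suc k) * B (Suc k)"
  have C1: "real (Suc k) * C (Suc k) = (c + real k) * B k"
    using hjacobi_coeff_minus1_Suc_mult[of k J \<beta>] by (simp add: B_def C_def c_def)
  have C2: "real (Suc (Suc k)) * C (Suc (Suc k)) = (c + real k + 1) * B (Suc k)"
    using hjacobi_coeff_minus1_Suc_mult[of "Suc k" J \<beta>] by (simp add: B_def C_def c_def algebra_simps)
  have "real (Suc k) * D = (c + real k) * real (J - k) * B k"
    using hjacobi_coeff_0_Suc[of k J \<beta>] by (simp add: D_def B_def c_def power2_eq_square)
  then have D: "real (Suc k) * D = (c + real k) * (real J - real k) * B k"
    using assms(1) by (simp add: of_nat_diff)
  have shift: "(if k = 0 then 0 else dw_coeffs (dw_coeffs C) (k - 1)) = real k * (c + real k) * B k"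
    using C1 by (cases k) (simp_all add: dw_coeffs_def)
  have "dw_coeffs (dw_coeffs C) k = (c + real k + 1) * D"
    using C2 by (simp add: dw_coeffs_def D_def algebra_simps)
  moreover have "dw_coeffs C k = (c + real k) * B k"
    using C1 by (simp add: dw_coeffs_def)
  moreover have "ds_coeffs J B k - dw_coeffs B k = (real J - real k) * B k - D"
    using assms(1) by (simp add: ds_coeffs_def dw_coeffs_def D_def of_nat_diff)
  moreover have "\<beta> + 1 = c - real J"
    by (simp add: c_def)
  ultimately show ?thesis
    unfolding shift using D by (simp add: algebra_simps) algebra
qed

lemma hjacobi_minus1_has_derivative_t:
  "((\<lambda>t. hjacobi (Suc J) (-1) \<beta> r t) has_real_derivative
     - 2 * (real J + \<beta> + 1) * t * hjacobi J 0 \<beta> r t) (at t)"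
proof -
  let ?C = "hjacobi_coeff (Suc J) (-1) \<beta>"
  have "((\<lambda>t. hjacobi (Suc J) (-1) \<beta> r t) has_real_derivative
      2 * t * binary_form J (\<lambda>k. ds_coeffs (Suc J) ?C k - dw_coeffs ?C k) (r - t\<^sup>2) (t\<^sup>2)) (at t)"
    using binary_form_has_derivative_t[of "Suc J" ?C r t]
    by (simp add: hjacobi_eq_binary_form hjacobi_coeff_eq_0)
  also have "2 * t * binary_form J (\<lambda>k. ds_coeffs (Suc J) ?C k - dw_coeffs ?C k) (r - t\<^sup>2) (t\<^sup>2)
      = - 2 * (real J + \<beta> + 1) * t * hjacobi J 0 \<beta> r t"
    by (simp add: hjacobi_coeff_minus1_dt hjacobi_eq_binary_form binary_form_scale[symmetric])
  finally show ?thesis .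
qed

lemma hjacobi_minus1_degree_raise:
  "(real J + \<beta> + 1 + real (Suc J)) * hjacobi (Suc J) (-1) \<beta> r t
     = (real J + \<beta> + 1) * (hjacobi (Suc J) 0 \<beta> r t - t\<^sup>2 * hjacobi J 0 \<beta> r t)"
proof -
  have shift: "t\<^sup>2 * hjacobi J 0 \<beta> r t = binary_form (Suc J) (hjacobi_coeff J 0 \<beta>) (r - t\<^sup>2) (t\<^sup>2)"
    using binary_form_mult_s[of "hjacobi_coeff J 0 \<beta>" "Suc J"]
    by (simp add: hjacobi_eq_binary_form hjacobi_coeff_eq_0)
  show ?thesis
    unfolding shift hjacobi_eq_binary_form[of "Suc J"] binary_form_diff binary_form_scale
    by (intro binary_form_cong hjacobi_coeff_minus1_degree_raise)
qed

lemma deriv_hjacobi_r: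
  "deriv (\<lambda>r. hjacobi J \<mu> \<beta> r t)
     = (\<lambda>r. binary_form (J - 1) (dw_coeffs (hjacobi_coeff J \<mu> \<beta>)) (r - t\<^sup>2) (t\<^sup>2))"
  unfolding hjacobi_eq_binary_form by (simp add: deriv_binary_form_w hjacobi_coeff_eq_0)

lemma deriv2_hjacobi_r:
  "deriv (deriv (\<lambda>r. hjacobi J \<mu> \<beta> r t)) r
     = binary_form (J - 1 - 1) (dw_coeffs (dw_coeffs (hjacobi_coeff J \<mu> \<beta>))) (r - t\<^sup>2) (t\<^sup>2)"
  unfolding deriv_hjacobi_r by (simp add: deriv_binary_form_w dw_coeffs_def hjacobi_coeff_eq_0)

lemma deriv2_hjacobi_minus1_t:
  fixes J :: nat and \<beta> r t :: real
  defines "B \<equiv> hjacobi_coeff J 0 \<beta>"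
  shows "deriv (deriv (hjacobi (Suc J) (-1) \<beta> r)) t
     = - 2 * (real J + \<beta> + 1) * hjacobi J 0 \<beta> r t
       - 4 * (real J + \<beta> + 1)
           * (t\<^sup>2 * binary_form (J - 1) (\<lambda>k. ds_coeffs J B k - dw_coeffs B k) (r - t\<^sup>2) (t\<^sup>2))"
proof -
  have "deriv (hjacobi (Suc J) (-1) \<beta> r) = (\<lambda>s. - 2 * (real J + \<beta> + 1) * s * hjacobi J 0 \<beta> r s)"
    by (intro ext DERIV_imp_deriv hjacobi_minus1_has_derivative_t)
  moreover have "((\<lambda>s. hjacobi J 0 \<beta> r s) has_real_derivative
      2 * t * binary_form (J - 1) (\<lambda>k. ds_coeffs J B k - dw_coeffs B k) (r - t\<^sup>2) (t\<^sup>2)) (at t)"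
    using binary_form_has_derivative_t[of J B r t] by (simp add: hjacobi_eq_binary_form B_def hjacobi_coeff_eq_0)
  ultimately show ?thesis
    by (intro DERIV_imp_deriv) (auto intro!: derivative_eq_intros simp: power2_eq_square algebra_simps)
qed

lemma hjacobi_minus1_wave:
  fixes J :: nat and \<beta> r t :: real
  defines "c \<equiv> real J + \<beta> + 1"
  shows "deriv (deriv (hjacobi (Suc J) (-1) \<beta> r)) t
           - 4 * r * deriv (deriv (\<lambda>r. hjacobi (Suc J) (-1) \<beta> r t)) r
           - 4 * (\<beta> + 1) * deriv (\<lambda>r. hjacobi (Suc J) (-1) \<beta> r t) r
         = - 2 * c * (2 * c + 2 * real J + 1) * hjacobi J 0 \<beta> r t"
proof -
  define B where "B = hjacobi_coeff J 0 \<beta>"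
  define C where "C = hjacobi_coeff (Suc J) (-1) \<beta>"
  define E where "E = (\<lambda>k. ds_coeffs J B k - dw_coeffs B k)"
  define w where "w = r - t\<^sup>2"
  have top: "E J = 0" "dw_coeffs (dw_coeffs C) J = 0"
    by (simp_all add: E_def B_def C_def ds_coeffs_def dw_coeffs_def hjacobi_coeff_eq_0)
  have "r = w + t\<^sup>2" by (simp add: w_def)
  then have "deriv (deriv (hjacobi (Suc J) (-1) \<beta> r)) t
           - 4 * r * deriv (deriv (\<lambda>r. hjacobi (Suc J) (-1) \<beta> r t)) r
           - 4 * (\<beta> + 1) * deriv (\<lambda>r. hjacobi (Suc J) (-1) \<beta> r t) r
      = - 2 * c * binary_form J B w (t\<^sup>2) - 4 * c * (t\<^sup>2 * binary_form (J - 1) E w (t\<^sup>2))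
        - 4 * (w * binary_form (J - 1) (dw_coeffs (dw_coeffs C)) w (t\<^sup>2))
        - 4 * (t\<^sup>2 * binary_form (J - 1) (dw_coeffs (dw_coeffs C)) w (t\<^sup>2))
        - 4 * (\<beta> + 1) * binary_form J (dw_coeffs C) w (t\<^sup>2)"
    unfolding deriv2_hjacobi_minus1_t deriv2_hjacobi_r unfolding deriv_hjacobi_r
    by (simp add: hjacobi_eq_binary_form B_def C_def E_def w_def c_def algebra_simps)
  also have "\<dots> = binary_form J (\<lambda>k. - 2 * c * B k - 4 * c * E k
        - 4 * (if k = 0 then 0 else dw_coeffs (dw_coeffs C) (k - 1))
        - 4 * dw_coeffs (dw_coeffs C) k - 4 * (\<beta> + 1) * dw_coeffs C k) w (t\<^sup>2)"
    unfolding binary_form_mult_s[of E J, OF top(1)]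
      binary_form_mult_s[of "dw_coeffs (dw_coeffs C)" J, OF top(2)]
      binary_form_mult_w[of "dw_coeffs (dw_coeffs C)" J, OF top(2)]
    by (simp only: binary_form_scale binary_form_diff)
  also have "\<dots> = binary_form J (\<lambda>k. - 2 * c * (2 * c + 2 * real J + 1) * B k) w (t\<^sup>2)"
    unfolding E_def B_def C_def c_def by (intro binary_form_cong hjacobi_coeff_minus1_wave)
  also have "\<dots> = - 2 * c * (2 * c + 2 * real J + 1) * hjacobi J 0 \<beta> r t"
    by (simp only: binary_form_scale[symmetric] hjacobi_eq_binary_form B_def w_def)
  finally show ?thesis .
qed

section \<open>Homogeneous polynomials and the Laplacian\<close>

lemma pdiff_eqI: "((\<lambda>s. f (y + s *\<^sub>R axis i 1)) has_real_derivative D) (at 0) \<Longrightarrow> pdiff i f y = D"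
  unfolding pdiff_def by (rule DERIV_imp_deriv)

definition monomial :: "('n::finite \<Rightarrow> nat) \<Rightarrow> real^'n \<Rightarrow> real" where
  "monomial \<alpha> x = (\<Prod>i\<in>UNIV. (x $ i) ^ \<alpha> i)"

lemma monomial_split: "monomial \<alpha> x = (x $ i) ^ \<alpha> i * (\<Prod>k\<in>UNIV - {i}. (x $ k) ^ \<alpha> k)"
  unfolding monomial_def by (simp add: prod.remove)

lemma monomial_line_has_derivative:
  "((\<lambda>s. monomial \<alpha> (y + s *\<^sub>R axis i 1)) has_real_derivative
     real (\<alpha> i) * monomial (\<alpha>(i := \<alpha> i - 1)) y) (at 0)"
proof -
  define R where "R = (\<Prod>k\<in>UNIV - {i}. (y $ k) ^ \<alpha> k)"
  have line: "monomial \<alpha> (y + s *\<^sub>R axis i 1) = (y $ i + s) ^ \<alpha> i * R" for s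
    unfolding monomial_split[of _ _ i] R_def by (auto simp: axis_def intro!: prod.cong)
  have lowered: "monomial (\<alpha>(i := \<alpha> i - 1)) y = (y $ i) ^ (\<alpha> i - 1) * R"
    unfolding monomial_split[of _ _ i] R_def by (auto intro!: prod.cong)
  show ?thesis
    unfolding line lowered by (auto intro!: derivative_eq_intros)
qed

lemma pdiff_monomial_sum:
  fixes Y :: "real^'n::finite \<Rightarrow> real"
  assumes Y: "\<And>x. Y x = (\<Sum>q\<in>S. c q * monomial (e q) x)"
  shows "pdiff i Y x = (\<Sum>q\<in>S. c q * real (e q i) * monomial ((e q)(i := e q i - 1)) x)"
    and "((\<lambda>s. Y (y + s *\<^sub>R axis i 1)) has_real_derivative pdiff i Y y) (at 0)"
proof -
  have deriv: "((\<lambda>s. Y (y + s *\<^sub>R axis i 1)) has_real_derivative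
      (\<Sum>q\<in>S. c q * real (e q i) * monomial ((e q)(i := e q i - 1)) y)) (at 0)" for y
    unfolding Y by (auto intro!: derivative_eq_intros monomial_line_has_derivative simp: algebra_simps)
  have formula: "pdiff i Y x = (\<Sum>q\<in>S. c q * real (e q i) * monomial ((e q)(i := e q i - 1)) x)" for x
    by (rule pdiff_eqI[OF deriv])
  then show "pdiff i Y x = (\<Sum>q\<in>S. c q * real (e q i) * monomial ((e q)(i := e q i - 1)) x)" .
  show "((\<lambda>s. Y (y + s *\<^sub>R axis i 1)) has_real_derivative pdiff i Y y) (at 0)"
    unfolding formula by (rule deriv)
qed

lemma euler_homogeneous:
  fixes Y :: "real^'n::finite \<Rightarrow> real"
  assumes Y: "\<And>x. Y x = (\<Sum>\<alpha> | sum \<alpha> UNIV = p. c \<alpha> * monomial \<alpha> x)"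
  shows "(\<Sum>i\<in>UNIV. y $ i * pdiff i Y y) = real p * Y y"
proof -
  have lowered: "y $ i * (real (\<alpha> i) * monomial (\<alpha>(i := \<alpha> i - 1)) y) = real (\<alpha> i) * monomial \<alpha> y"
    for i and \<alpha> :: "'n \<Rightarrow> nat"
    by (cases "\<alpha> i") (auto simp: monomial_split[of _ _ i] intro!: prod.cong)
  have "(\<Sum>i\<in>UNIV. y $ i * pdiff i Y y)
      = (\<Sum>i\<in>UNIV. \<Sum>\<alpha> | sum \<alpha> UNIV = p. c \<alpha> * (real (\<alpha> i) * monomial \<alpha> y))"
    unfolding pdiff_monomial_sum(1)[of Y, OF Y] sum_distrib_left
    by (intro sum.cong refl) (metis (no_types, lifting) lowered mult.assoc mult.left_commute)
  also have "\<dots> = (\<Sum>\<alpha> | sum \<alpha> UNIV = p. c \<alpha> * ((\<Sum>i\<in>UNIV. real (\<alpha> i)) * monomial \<alpha> y))"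
    by (subst sum.swap) (simp add: sum_distrib_left[symmetric] sum_distrib_right[symmetric])
  also have "\<dots> = real p * Y y"
    unfolding Y sum_distrib_left by (intro sum.cong refl) (auto simp flip: of_nat_sum)
  finally show ?thesis .
qed

lemma norm_add_axis_sq:
  "(norm (y + s *\<^sub>R axis i 1))\<^sup>2 = (norm (y :: real^'n::finite))\<^sup>2 + 2 * s * y $ i + s\<^sup>2"
  unfolding power2_norm_eq_inner
  by (simp add: inner_add_left inner_add_right inner_axis inner_commute power2_eq_square algebra_simps)

lemma norm_sq_eq_sum: "(norm (x :: real^'n::finite))\<^sup>2 = (\<Sum>i\<in>UNIV. (x $ i)\<^sup>2)"
  unfolding power2_norm_eq_inner inner_vec_def by (simp add: power2_eq_square)

lemma has_real_derivative_radial_line: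
  fixes y :: "real^'n::finite"
  assumes "\<And>r. (f has_real_derivative f' r) (at r)"
  shows "((\<lambda>s. f ((norm (y + s *\<^sub>R axis i 1))\<^sup>2)) has_real_derivative
           f' ((norm y)\<^sup>2) * (2 * y $ i)) (at 0)"
proof -
  have "((\<lambda>s. (norm y)\<^sup>2 + 2 * s * y $ i + s\<^sup>2) has_real_derivative 2 * y $ i) (at 0)"
    by (auto intro!: derivative_eq_intros)
  from DERIV_chain2[OF assms this] show ?thesis
    unfolding norm_add_axis_sq by simp
qed

lemma pdiff2_radial_mult:
  fixes Y :: "real^'n::finite \<Rightarrow> real"
  assumes Y: "\<And>x. Y x = (\<Sum>q\<in>S. c q * monomial (e q) x)"
    and \<Phi>: "\<And>r. (\<Phi> has_real_derivative \<Phi>' r) (at r)"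
    and \<Phi>': "\<And>r. (\<Phi>' has_real_derivative \<Phi>'' r) (at r)"
  shows "pdiff i (pdiff i (\<lambda>y. \<Phi> ((norm y)\<^sup>2) * Y y)) y
     = 4 * \<Phi>'' ((norm y)\<^sup>2) * (y $ i)\<^sup>2 * Y y + 2 * \<Phi>' ((norm y)\<^sup>2) * Y y
       + 4 * \<Phi>' ((norm y)\<^sup>2) * (y $ i * pdiff i Y y) + \<Phi> ((norm y)\<^sup>2) * pdiff i (pdiff i Y) y"
proof -
  note dY = pdiff_monomial_sum(2)[OF Y]
  note dY' = pdiff_monomial_sum(2)[OF pdiff_monomial_sum(1)[OF Y]]
  define P where "P y = \<Phi>' ((norm y)\<^sup>2) * (2 * y $ i) * Y y + \<Phi> ((norm y)\<^sup>2) * pdiff i Y y" for y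
  have "pdiff i (\<lambda>y. \<Phi> ((norm y)\<^sup>2) * Y y) = P"
  proof (intro ext pdiff_eqI)
    fix y
    show "((\<lambda>s. \<Phi> ((norm (y + s *\<^sub>R axis i 1))\<^sup>2) * Y (y + s *\<^sub>R axis i 1))
            has_real_derivative P y) (at 0)"
      unfolding P_def using DERIV_mult[OF has_real_derivative_radial_line[OF \<Phi>] dY]
      by (simp add: algebra_simps)
  qed
  moreover have "((\<lambda>s. P (y + s *\<^sub>R axis i 1)) has_real_derivative
      4 * \<Phi>'' ((norm y)\<^sup>2) * (y $ i)\<^sup>2 * Y y + 2 * \<Phi>' ((norm y)\<^sup>2) * Y y
      + 4 * \<Phi>' ((norm y)\<^sup>2) * (y $ i * pdiff i Y y) + \<Phi> ((norm y)\<^sup>2) * pdiff i (pdiff i Y) y) (at 0)"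
    unfolding P_def
    by (rule derivative_eq_intros has_real_derivative_radial_line[OF \<Phi>]
        has_real_derivative_radial_line[OF \<Phi>'] dY dY' refl | simp add: axis_def)+
      (simp add: power2_eq_square algebra_simps)
  ultimately show ?thesis
    by (simp add: pdiff_eqI)
qed

lemma laplacian_radial_mult_homogeneous:
  fixes Y :: "real^'n::finite \<Rightarrow> real"
  assumes Y: "\<And>x. Y x = (\<Sum>\<alpha> | sum \<alpha> UNIV = p. c \<alpha> * monomial \<alpha> x)"
    and \<Phi>: "\<And>r. (\<Phi> has_real_derivative \<Phi>' r) (at r)"
    and \<Phi>': "\<And>r. (\<Phi>' has_real_derivative \<Phi>'' r) (at r)"
  shows "laplacian (\<lambda>y. \<Phi> ((norm y)\<^sup>2) * Y y) x
     = (4 * (norm x)\<^sup>2 * \<Phi>'' ((norm x)\<^sup>2) + (2 * real CARD('n) + 4 * real p) * \<Phi>' ((norm x)\<^sup>2)) * Y x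
       + \<Phi> ((norm x)\<^sup>2) * laplacian Y x"
proof -
  have "laplacian (\<lambda>y. \<Phi> ((norm y)\<^sup>2) * Y y) x
      = 4 * \<Phi>'' ((norm x)\<^sup>2) * (\<Sum>i\<in>UNIV. (x $ i)\<^sup>2) * Y x
        + real CARD('n) * (2 * \<Phi>' ((norm x)\<^sup>2) * Y x)
        + 4 * \<Phi>' ((norm x)\<^sup>2) * (\<Sum>i\<in>UNIV. x $ i * pdiff i Y x)
        + \<Phi> ((norm x)\<^sup>2) * (\<Sum>i\<in>UNIV. pdiff i (pdiff i Y) x)"
    unfolding laplacian_def pdiff2_radial_mult[where e="\<lambda>\<alpha>. \<alpha>", OF Y \<Phi> \<Phi>']
    by (simp add: sum.distrib sum_distrib_left sum_distrib_right algebra_simps)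
  also have "\<dots> = (4 * (norm x)\<^sup>2 * \<Phi>'' ((norm x)\<^sup>2)
                      + (2 * real CARD('n) + 4 * real p) * \<Phi>' ((norm x)\<^sup>2)) * Y x
                   + \<Phi> ((norm x)\<^sup>2) * laplacian Y x"
    unfolding norm_sq_eq_sum[symmetric] euler_homogeneous[OF Y] laplacian_def
    by (simp add: algebra_simps)
  finally show ?thesis .
qed

section \<open>The operator e^t (d_tt - Delta) e^-t on Q\<close>

lemma real_polynomial_function_has_real_derivative:
  "real_polynomial_function f \<Longrightarrow> (f has_real_derivative deriv f x) (at x)"
  by (simp add: DERIV_deriv_iff_real_differentiable differentiable_at_real_polynomial_function)

lemma real_polynomial_function_deriv:
  assumes "real_polynomial_function f"
  shows "real_polynomial_function (deriv f)"
proof -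
  obtain f' where "real_polynomial_function f'" "\<And>x. (f has_real_derivative f' x) (at x)"
    using has_real_derivative_polynomial_function[OF assms] by blast
  moreover from this(2) have "deriv f = f'"
    by (intro ext DERIV_imp_deriv)
  ultimately show ?thesis by simp
qed

lemma real_polynomial_function_hjacobi:
  "real_polynomial_function (hjacobi j \<mu> \<beta> r)" "real_polynomial_function (\<lambda>r. hjacobi j \<mu> \<beta> r t)"
  unfolding hjacobi_def by (intro real_polynomial_function_sum real_polynomial_function.intros
      real_polynomial_function_power real_polynomial_function_diff; simp)+

lemma wave_laguerre_radial_harmonic:
  fixes Y :: "real^'n::finite \<Rightarrow> real" and F :: "real \<Rightarrow> real \<Rightarrow> real"
  assumes Y: "Y \<in> harmonic_hom p"
    and F_t: "real_polynomial_function (F ((norm x)\<^sup>2))"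
    and F_r: "real_polynomial_function (\<lambda>r. F r t)"
  shows "exp t * (deriv (deriv (\<lambda>s. exp (- s) * (laguerre N a s * F ((norm x)\<^sup>2) s * Y x))) t
            - laplacian (\<lambda>y. exp (- t) * (laguerre N a t * F ((norm y)\<^sup>2) t * Y y)) x)
       = (laguerre N (a + 2) t * F ((norm x)\<^sup>2) t
          - 2 * laguerre N (a + 1) t * deriv (F ((norm x)\<^sup>2)) t
          + laguerre N a t * (deriv (deriv (F ((norm x)\<^sup>2))) t
              - 4 * (norm x)\<^sup>2 * deriv (deriv (\<lambda>r. F r t)) ((norm x)\<^sup>2)
              - (2 * real CARD('n) + 4 * real p) * deriv (\<lambda>r. F r t) ((norm x)\<^sup>2))) * Y x"
proof -
  obtain c where Y_eq: "\<And>x. Y x = (\<Sum>\<alpha> | sum \<alpha> UNIV = p. c \<alpha> * monomial \<alpha> x)"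
    and harmonic: "\<And>x. laplacian Y x = 0"
    using Y unfolding harmonic_hom_def monomial_def by blast
  let ?g = "\<lambda>r. F r t" and ?K = "exp (- t) * laguerre N a t"
  have time: "deriv (deriv (\<lambda>s. exp (- s) * (laguerre N a s * F ((norm x)\<^sup>2) s * Y x))) t
      = exp (- t) * (laguerre N (a + 2) t * F ((norm x)\<^sup>2) t
          - 2 * laguerre N (a + 1) t * deriv (F ((norm x)\<^sup>2)) t
          + laguerre N a t * deriv (deriv (F ((norm x)\<^sup>2))) t) * Y x"
    by (intro deriv2_exp_laguerre_mult real_polynomial_function_has_real_derivative
        real_polynomial_function_deriv F_t)
  have "laplacian (\<lambda>y. (\<lambda>r. ?K * ?g r) ((norm y)\<^sup>2) * Y y) x
      = (4 * (norm x)\<^sup>2 * (?K * deriv (deriv ?g) ((norm x)\<^sup>2))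
         + (2 * real CARD('n) + 4 * real p) * (?K * deriv ?g ((norm x)\<^sup>2))) * Y x"
    using laplacian_radial_mult_homogeneous[OF Y_eq, of "\<lambda>r. ?K * ?g r" "\<lambda>r. ?K * deriv ?g r"
        "\<lambda>r. ?K * deriv (deriv ?g) r" x]
    by (simp add: harmonic DERIV_cmult real_polynomial_function_has_real_derivative
        real_polynomial_function_deriv F_r)
  then have space: "laplacian (\<lambda>y. exp (- t) * (laguerre N a t * F ((norm y)\<^sup>2) t * Y y)) x
      = exp (- t) * laguerre N a t * (4 * (norm x)\<^sup>2 * deriv (deriv ?g) ((norm x)\<^sup>2)
         + (2 * real CARD('n) + 4 * real p) * deriv ?g ((norm x)\<^sup>2)) * Y x"
    by (simp add: algebra_simps)
  show ?thesis
    unfolding time space by (simp add: exp_minus field_simps)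
qed

lemma wave_Qpoly:
  fixes Y :: "real^'n::finite \<Rightarrow> real" and \<mu> :: real
  assumes Y: "Y \<in> harmonic_hom (m - 2 * j)" and "2 * j \<le> m"
  defines "\<beta> \<equiv> real m - 2 * real j + (real CARD('n) - 2) / 2"
    and "a \<equiv> 2 * real m + 2 * \<mu> + real CARD('n)"
  shows "exp t * (deriv (deriv (\<lambda>s. exp (- s) * Qpoly n m j \<mu> Y x s)) t
            - laplacian (\<lambda>y. exp (- t) * Qpoly n m j \<mu> Y y t) x)
       = (laguerre (n - m) (a + 2) t * hjacobi j \<mu> \<beta> ((norm x)\<^sup>2) t
          - 2 * laguerre (n - m) (a + 1) t * deriv (hjacobi j \<mu> \<beta> ((norm x)\<^sup>2)) t
          + laguerre (n - m) a t * (deriv (deriv (hjacobi j \<mu> \<beta> ((norm x)\<^sup>2))) t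
              - 4 * (norm x)\<^sup>2 * deriv (deriv (\<lambda>r. hjacobi j \<mu> \<beta> r t)) ((norm x)\<^sup>2)
              - 4 * (\<beta> + 1) * deriv (\<lambda>r. hjacobi j \<mu> \<beta> r t) ((norm x)\<^sup>2))) * Y x"
proof -
  have "2 * real CARD('n) + 4 * real (m - 2 * j) = 4 * (\<beta> + 1)"
    using assms(2) by (simp add: \<beta>_def of_nat_diff field_simps)
  then show ?thesis
    using wave_laguerre_radial_harmonic[OF Y real_polynomial_function_hjacobi]
    unfolding Qpoly_def \<beta>_def[symmetric] a_def[symmetric] by simp
qed

lemma acoef_0: "d \<ge> 1 \<Longrightarrow> acoef d m 0 = 1"
  by (cases m) (auto simp: acoef_def)

lemma wave_Qpoly_minus1_Suc:
  fixes Y :: "real^'n::finite \<Rightarrow> real"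
  assumes Y: "Y \<in> harmonic_hom (m - 2 * Suc J)" and "2 * Suc J \<le> m"
    and \<beta>: "\<beta> = real m - 2 * real (Suc J) + (real CARD('n) - 2) / 2"
    and \<gamma>: "\<gamma> = 2 * real m - 2 + real CARD('n)"
  shows "exp t * (deriv (deriv (\<lambda>s. exp (- s) * Qpoly n m (Suc J) (-1) Y x s)) t
            - laplacian (\<lambda>y. exp (- t) * Qpoly n m (Suc J) (-1) Y y t) x)
       = (laguerre (n - m) (\<gamma> + 2) t * hjacobi (Suc J) (-1) \<beta> ((norm x)\<^sup>2) t
          + 4 * (real J + \<beta> + 1) * t * laguerre (n - m) (\<gamma> + 1) t * hjacobi J 0 \<beta> ((norm x)\<^sup>2) t
          - 2 * (real J + \<beta> + 1) * (\<gamma> - 1) * laguerre (n - m) \<gamma> t * hjacobi J 0 \<beta> ((norm x)\<^sup>2) t)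
         * Y x"
proof -
  let ?\<rho> = "(norm x)\<^sup>2" and ?c = "real J + \<beta> + 1"
  have \<gamma>_eq: "2 * real m + 2 * - 1 + real CARD('n) = \<gamma>" "2 * ?c + 2 * real J + 1 = \<gamma> - 1"
    using assms(2) by (simp_all add: \<gamma> \<beta> field_simps)
  have dt: "deriv (hjacobi (Suc J) (-1) \<beta> ?\<rho>) t = - 2 * ?c * t * hjacobi J 0 \<beta> ?\<rho> t"
    by (rule DERIV_imp_deriv hjacobi_minus1_has_derivative_t)+
  show ?thesis
    unfolding wave_Qpoly[where \<mu>="-1", OF Y assms(2), folded \<beta>, unfolded \<gamma>_eq(1)]
    unfolding dt hjacobi_minus1_wave \<gamma>_eq(2) by (simp add: algebra_simps)
qed

lemma Qpoly_0_combination_Suc: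
  fixes Y :: "real^'n::finite \<Rightarrow> real"
  assumes "m \<le> n" and "2 * Suc J \<le> m"
    and \<beta>: "\<beta> = real m - 2 * real (Suc J) + (real CARD('n) - 2) / 2"
    and \<gamma>: "\<gamma> = 2 * real m - 2 + real CARD('n)"
  shows "acoef CARD('n) m (Suc J) * (Qpoly n m (Suc J) 0 Y x t - bcoef m n * Qpoly n (m - 2) J 0 Y x t)
       = (real J + \<beta> + 1) / (real J + \<beta> + 1 + real (Suc J))
         * (laguerre (n - m) (\<gamma> + 2) t * hjacobi (Suc J) 0 \<beta> ((norm x)\<^sup>2) t
            - real (Suc (n - m)) * real (Suc (Suc (n - m))) * laguerre (Suc (Suc (n - m))) (\<gamma> - 2) t
              * hjacobi J 0 \<beta> ((norm x)\<^sup>2) t) * Y x"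
proof -
  have args: "n - (m - 2) = Suc (Suc (n - m))" "2 * real (m - 2) + 2 * 0 + real CARD('n) = \<gamma> - 2"
    "real (m - 2) - 2 * real J + (real CARD('n) - 2) / 2 = \<beta>"
    "2 * real m + 2 * 0 + real CARD('n) = \<gamma> + 2"
    using assms by (simp_all add: of_nat_diff)
  have Q: "Qpoly n m (Suc J) 0 Y x t = laguerre (n - m) (\<gamma> + 2) t * hjacobi (Suc J) 0 \<beta> ((norm x)\<^sup>2) t * Y x"
    and Q': "Qpoly n (m - 2) J 0 Y x t
      = laguerre (Suc (Suc (n - m))) (\<gamma> - 2) t * hjacobi J 0 \<beta> ((norm x)\<^sup>2) t * Y x"
    unfolding Qpoly_def args \<beta>[symmetric] by simp_all
  have "acoef CARD('n) m (Suc J) = (real J + \<beta> + 1) / (real J + \<beta> + 1 + real (Suc J))"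
    using assms(2) by (simp add: acoef_def \<beta> field_simps)
  moreover have "bcoef m n = real (Suc (n - m)) * real (Suc (Suc (n - m)))"
    using assms(1) by (simp add: bcoef_def of_nat_diff algebra_simps)
  ultimately show ?thesis
    unfolding Q Q' by (simp add: algebra_simps)
qed

lemma laguerre_hjacobi_minus1_identity:
  fixes N J :: nat and \<beta> \<gamma> r t :: real
  assumes \<gamma>: "\<gamma> = 2 * (real J + \<beta> + 1 + real (Suc J))" and "\<gamma> \<noteq> 0"
  shows "laguerre N (\<gamma> + 2) t * hjacobi (Suc J) (-1) \<beta> r t
          + 4 * (real J + \<beta> + 1) * t * laguerre N (\<gamma> + 1) t * hjacobi J 0 \<beta> r t
          - 2 * (real J + \<beta> + 1) * (\<gamma> - 1) * laguerre N \<gamma> t * hjacobi J 0 \<beta> r t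
       = (real J + \<beta> + 1) / (real J + \<beta> + 1 + real (Suc J))
         * (laguerre N (\<gamma> + 2) t * hjacobi (Suc J) 0 \<beta> r t
            - real (Suc N) * real (Suc (Suc N)) * laguerre (Suc (Suc N)) (\<gamma> - 2) t * hjacobi J 0 \<beta> r t)"
proof -
  define c where "c = real J + \<beta> + 1"
  have K: "c + real (Suc J) \<noteq> 0"
    using assms by (simp add: c_def)
  have raise: "hjacobi (Suc J) (-1) \<beta> r t
      = c * (hjacobi (Suc J) 0 \<beta> r t - t\<^sup>2 * hjacobi J 0 \<beta> r t) / (c + real (Suc J))"
    using hjacobi_minus1_degree_raise[of J \<beta> r t] K by (simp add: c_def field_simps)
  show ?thesis
    unfolding laguerre_Suc_Suc_minus_2 raise c_def[symmetric] \<gamma> using K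
    by (simp add: field_simps)
qed

theorem theorem2p5:
  fixes Y :: "real^'n::finite \<Rightarrow> real" and n m j :: nat and x :: "real^'n" and t :: real
  assumes "m \<le> n" and "2 * j \<le> m" and "Y \<in> harmonic_hom (m - 2 * j)"
  shows "exp t * (deriv (deriv (\<lambda>s. exp (- s) * Qpoly n m j (-1) Y x s)) t
                  - laplacian (\<lambda>y. exp (- t) * Qpoly n m j (-1) Y y t) x)
         = acoef CARD('n) m j * (Qpoly n m j 0 Y x t
             - (if j = 0 then 0 else bcoef m n * Qpoly n (m - 2) (j - 1) 0 Y x t))"
proof (cases j)
  case 0
  have "CARD('n) \<ge> 1" "2 * real m + 2 * - 1 + real CARD('n) + 2 = 2 * real m + 2 * 0 + real CARD('n)"
    by (simp_all add: Suc_le_eq)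
  then show ?thesis
    using wave_Qpoly[where \<mu>="-1" and n=n and x=x and t=t, OF assms(3,2)]
    by (simp add: 0 Qpoly_def hjacobi_0 acoef_0)
next
  case (Suc J)
  define \<beta> \<gamma> where "\<beta> = real m - 2 * real (Suc J) + (real CARD('n) - 2) / 2"
    and "\<gamma> = 2 * real m - 2 + real CARD('n)"
  have \<gamma>: "\<gamma> = 2 * (real J + \<beta> + 1 + real (Suc J))" "\<gamma> \<noteq> 0"
    using assms(2) by (simp_all add: \<beta>_def \<gamma>_def Suc field_simps)
  show ?thesis
    unfolding Suc
    by (simp only: wave_Qpoly_minus1_Suc[OF assms(3,2)[unfolded Suc] \<beta>_def \<gamma>_def]
        laguerre_hjacobi_minus1_identity[OF \<gamma>]
        Qpoly_0_combination_Suc[OF assms(1) assms(2)[unfolded Suc] \<beta>_def \<gamma>_def]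
        nat.distinct if_False diff_Suc_1)
qed

end
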